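(* Assume (A1)–(A2) and $N\geq \max\{1,\|f\|_\infty/2\}$. Then the semi-discrete policy iteration process described in the context is well-defined, that is, there are Lipschitz continuous functions $v_n^h,\alpha_n$ satisfying its equations for all $n\ge0$, and the functions $v_n^h$ are uniformly bounded for all $n\geq 0$ and $h>0$.
   Context: Let $d,m\ge1$, $T\ge 1$, $A\subset\mathbb{R}^m$ compact, $c:[0,T]\times\mathbb{R}^d\times A\to\mathbb{R}$, $f:[0,T]\times\mathbb{R}^d\times A\to\mathbb{R}^d$, $q:\mathbb{R}^d\to\mathbb{R}$. Let $\alpha(t,x,p)=\operatorname{argmin}_{a\in A}[c(t,x,a)+p\cdot f(t,x,a)]$, assumed to be the unique minimizer. Assumptions: (A1) $c,f,q$ are uniformly bounded and Lipschitz continuous in all their variables; (A2) $\alpha(\cdot,\cdot,\cdot)$ and a given continuous initial policy $\alpha_0:\mathbb{R}\times\mathbb{R}^d\to A$ are uniformly Lipschitz continuous in all their variables. $\|f\|_\infty=\sup|f|$. For $\varphi:\mathbb{R}^d\to\mathbb{R}$, $h\in(0,1)$: $\nabla^h\varphi(x)=\big(\frac{\varphi(x+he_i)-\varphi(x-he_i)}{2h}\big)_{i=1}^d$, $\Delta^h\varphi(x)=\sum_{i=1}^d\frac{\varphi(x+he_i)-2\varphi(x)+\varphi(x-he_i)}{h^2}$ (acting in $x$). Semi-discrete policy iteration: for $n=0,1,\dots$, $v_n^h$ solves $\partial_t v_n^h+c(t,x,\alpha_n(t,x))+\nabla^h v_n^h\cdot f(t,x,\alpha_n(t,x))=-Nh\Delta^h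 v_n^h$ in $(0,T)\times\mathbb{R}^d$, $v_n^h(T,x)=q(x)$ on $\mathbb{R}^d$, and then $\alpha_{n+1}(t,x)=\alpha(t,x,\nabla^h v_n^h(t,x))$ in $(0,T)\times\mathbb{R}^d$. *)

theory Defs
  imports "HOL-Analysis.Analysis"
begin

definition grad_h :: "real \<Rightarrow> (real^'d \<Rightarrow> real) \<Rightarrow> real^'d \<Rightarrow> real^'d" where
  "grad_h h \<phi> x = (\<chi> i. (\<phi> (x + h *\<^sub>R axis i 1) - \<phi> (x - h *\<^sub>R axis i 1)) / (2 * h))"

definition lap_h :: "real \<Rightarrow> (real^'d \<Rightarrow> real) \<Rightarrow> real^'d \<Rightarrow> real" where
  "lap_h h \<phi> x = (\<Sum>i\<in>UNIV. (\<phi> (x + h *\<^sub>R axis i 1) - 2 * \<phi> x + \<phi> (x - h *\<^sub>R axis i 1)) / h\<^sup>2)"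

definition sup_norm :: "real \<Rightarrow> 'm set \<Rightarrow> (real \<Rightarrow> real^'d \<Rightarrow> 'm \<Rightarrow> real^'d) \<Rightarrow> real" where
  "sup_norm T A f = (SUP z \<in> {0..T} \<times> (UNIV::(real^'d) set) \<times> A. norm (f (fst z) (fst (snd z)) (snd (snd z))))"

end

theory Submission
  imports Defs
begin

(*
  For a fixed admissible policy, reversing time (w s = v (T - s)) turns the scheme into a linear
  system of ODEs w' = g + P w - l w indexed by x, where
  (P u) x = sum_i a_i^+ x * u (x + h e_i) + a_i^- x * u (x - h e_i) with a_i^+- = N/h +- f_i/(2h).
  The condition N >= |f|/2 makes the weights nonnegative with row sum l = 2 d N / h, so P is a
  positive operator of norm l: the scheme is monotone. After the substitution U = e^(l s) w the
  equation reads U' = e^(l s) g + P U, whose Picard series converges like the exponential series.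
  The same positivity drives a Groenwall-type bootstrap comparing U with e^(l s) (sup|q| + s sup|c|),
  which gives |v| <= sup|q| + T sup|c| independently of h, n and the policy, and analogous Lipschitz
  bounds. Since the discrete gradient of a Lipschitz function is Lipschitz (with constant O(1/h)),
  the updated policy alpha(t, x, grad_h v) is again Lipschitz and the iteration can continue.
*)

section \<open>Comparison lemmas\<close>

lemma abs_le_by_derivative_comparison:
  fixes F R F' R' :: "real \<Rightarrow> real"
  assumes "a \<le> b"
    and F: "\<And>r. r \<in> {a..b} \<Longrightarrow> (F has_real_derivative F' r) (at r within {a..b})"
    and R: "\<And>r. r \<in> {a..b} \<Longrightarrow> (R has_real_derivative R' r) (at r within {a..b})"
    and dominated: "\<And>r. r \<in> {a..b} \<Longrightarrow> \<bar>F' r\<bar> \<le> R' r"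
    and initial: "\<bar>F a\<bar> \<le> R a"
  shows "\<bar>F b\<bar> \<le> R b"
proof -
  have "R a + \<sigma> * F a \<le> R b + \<sigma> * F b" if \<sigma>: "\<bar>\<sigma>\<bar> = 1" for \<sigma>
  proof -
    have "(\<lambda>r. R r + \<sigma> * F r) a \<le> (\<lambda>r. R r + \<sigma> * F r) b"
    proof (rule DERIV_nonneg_imp_increasing_open[OF \<open>a \<le> b\<close>])
      fix r assume r: "a < r" "r < b"
      then have "at r within {a..b} = at r" by (simp add: at_within_Icc_at)
      then have "((\<lambda>r. R r + \<sigma> * F r) has_real_derivative R' r + \<sigma> * F' r) (at r)"
        using F[of r] R[of r] r by (auto intro!: DERIV_add DERIV_cmult)
      moreover have "0 \<le> R' r + \<sigma> * F' r"
        using dominated[of r] r abs_ge_minus_self[of "\<sigma> * F' r"] \<sigma> by (auto simp: abs_mult)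
      ultimately show "\<exists>y. ((\<lambda>r. R r + \<sigma> * F r) has_real_derivative y) (at r) \<and> 0 \<le> y" by blast
    qed (intro continuous_intros DERIV_continuous_on[OF F] DERIV_continuous_on[OF R])
    then show ?thesis by simp
  qed
  from this[of 1] this[of "-1"] initial show ?thesis by auto
qed

lemma power_over_fact_tendsto_zero: "(\<lambda>k. M * (x::real)^k / fact k) \<longlonglongrightarrow> 0"
proof -
  have "(\<lambda>k. x^k /\<^sub>R fact k) \<longlonglongrightarrow> 0"
    using exp_converges[of x] by (intro summable_LIMSEQ_zero sums_summable)
  then have "(\<lambda>k. M * (x^k /\<^sub>R fact k)) \<longlonglongrightarrow> M * 0" by (intro tendsto_intros)
  then show ?thesis by (simp add: divide_inverse ac_simps)
qed

lemma sums_const_mult_exp: "(\<lambda>k. B * (x::real)^k / fact k) sums (B * exp x)"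
  using sums_mult[OF exp_converges, of B x] by (simp add: divide_inverse ac_simps)

lemma nonpos_by_factorial_iteration:
  fixes \<phi> :: "'z \<Rightarrow> real \<Rightarrow> real"
  assumes bounded: "\<And>z s. s \<in> {0..T} \<Longrightarrow> \<phi> z s \<le> M"
    and improve: "\<And>k z s. s \<in> {0..T} \<Longrightarrow>
        (\<And>z' r. r \<in> {0..s} \<Longrightarrow> \<phi> z' r \<le> M * (L * r)^k / fact k) \<Longrightarrow>
        \<phi> z s \<le> M * (L * s)^Suc k / fact (Suc k)"
    and s: "s \<in> {0..T}"
  shows "\<phi> z s \<le> 0"
proof -
  have iterate: "\<forall>z s. s \<in> {0..T} \<longrightarrow> \<phi> z s \<le> M * (L * s)^k / fact k" for k
  proof (induction k)
    case 0
    then show ?case using bounded by simp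
  next
    case (Suc k)
    show ?case
    proof (intro allI impI)
      fix z s assume "s \<in> {0..T}"
      then show "\<phi> z s \<le> M * (L * s)^Suc k / fact (Suc k)"
        by (rule improve) (use Suc.IH \<open>s \<in> {0..T}\<close> in auto)
    qed
  qed
  show ?thesis
    by (rule LIMSEQ_le_const[OF power_over_fact_tendsto_zero[of M "L * s"]]) (use iterate s in auto)
qed

lemma has_real_derivative_power_over_fact:
  "((\<lambda>s. B * (L * s)^Suc k / fact (Suc k)) has_real_derivative L * (B * (L * s)^k / fact k))
    (at s within S)"
proof -
  have "((\<lambda>s. B * (L * s)^Suc k / fact (Suc k)) has_real_derivative
      B * (real (Suc k) * (L * s)^k * L) / fact (Suc k)) (at s within S)"
    by (auto intro!: derivative_eq_intros simp del: power_Suc)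
  moreover have "B * (real (Suc k) * (L * s)^k * L) / fact (Suc k) = L * (B * (L * s)^k / fact k)"
    by (simp add: fact_Suc field_simps del: of_nat_Suc)
  ultimately show ?thesis by (metis (no_types, lifting))
qed

lemma has_real_derivative_exp_mult_affine:
  "((\<lambda>r. exp (l * r) * (a + b * r)) has_real_derivative exp (l * r) * b + l * (exp (l * r) * (a + b * r)))
    (at r within S)"
  by (auto intro!: derivative_eq_intros simp: algebra_simps)

lemma lipschitz_on_separately:
  fixes w :: "'t::metric_space \<Rightarrow> 'a::metric_space \<Rightarrow> real"
  assumes "0 \<le> A" "0 \<le> B"
    and time: "\<And>s s' x. s \<in> S \<Longrightarrow> s' \<in> S \<Longrightarrow> \<bar>w s x - w s' x\<bar> \<le> A * dist s s'"
    and space: "\<And>s x y. s \<in> S \<Longrightarrow> \<bar>w s x - w s y\<bar> \<le> B * dist x y"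
  shows "(A + B)-lipschitz_on (S \<times> UNIV) (\<lambda>(s, x). w s x)"
proof (rule lipschitz_onI)
  fix p p' :: "'t \<times> 'a" assume "p \<in> S \<times> UNIV" "p' \<in> S \<times> UNIV"
  moreover obtain s x s' y where p: "p = (s, x)" "p' = (s', y)" by force
  ultimately have s: "s \<in> S" "s' \<in> S" by auto
  have "dist s s' \<le> dist p p'" "dist x y \<le> dist p p'"
    using dist_fst_le[of p p'] dist_snd_le[of p p'] p by auto
  then have "A * dist s s' + B * dist x y \<le> (A + B) * dist p p'"
    using assms(1,2) by (simp add: distrib_right add_mono mult_left_mono)
  moreover have "\<bar>w s x - w s' y\<bar> \<le> A * dist s s' + B * dist x y"
    using time[OF s, of x] space[OF s(2), of x y] by linarith
  ultimately show "dist ((\<lambda>(s, x). w s x) p) ((\<lambda>(s, x). w s x) p') \<le> (A + B) * dist p p'"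
    using p by (simp add: dist_real_def)
qed (use assms in simp)

section \<open>Stencil operators\<close>

definition stencil :: "real \<Rightarrow> ('d::finite \<Rightarrow> real^'d \<Rightarrow> real) \<Rightarrow> ('d \<Rightarrow> real^'d \<Rightarrow> real)
    \<Rightarrow> (real^'d \<Rightarrow> real) \<Rightarrow> real^'d \<Rightarrow> real" where
  "stencil h ap am u x =
     (\<Sum>i\<in>UNIV. ap i x * u (x + h *\<^sub>R axis i 1) + am i x * u (x - h *\<^sub>R axis i 1))"

lemma stencil_cmult: "stencil h ap am (\<lambda>y. c * u y) x = c * stencil h ap am u x"
  unfolding stencil_def by (simp add: sum_distrib_left algebra_simps)

lemma stencil_abs_le:
  assumes "\<And>i. 0 \<le> ap i x" "\<And>i. 0 \<le> am i x" "(\<Sum>i\<in>UNIV. ap i x + am i x) = l"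
    and "\<And>y. \<bar>u y\<bar> \<le> b"
  shows "\<bar>stencil h ap am u x\<bar> \<le> l * b"
proof -
  have "\<bar>stencil h ap am u x\<bar>
      \<le> (\<Sum>i\<in>UNIV. \<bar>ap i x * u (x + h *\<^sub>R axis i 1) + am i x * u (x - h *\<^sub>R axis i 1)\<bar>)"
    unfolding stencil_def by (rule sum_abs)
  also have "\<dots> \<le> (\<Sum>i\<in>UNIV. ap i x * b + am i x * b)"
  proof (rule sum_mono)
    fix i
    have "\<bar>ap i x * u (x + h *\<^sub>R axis i 1)\<bar> \<le> ap i x * b"
      using assms(1)[of i] assms(4) by (simp add: abs_mult mult_left_mono)
    moreover have "\<bar>am i x * u (x - h *\<^sub>R axis i 1)\<bar> \<le> am i x * b"
      using assms(2)[of i] assms(4) by (simp add: abs_mult mult_left_mono)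
    ultimately show "\<bar>ap i x * u (x + h *\<^sub>R axis i 1) + am i x * u (x - h *\<^sub>R axis i 1)\<bar>
        \<le> ap i x * b + am i x * b" by linarith
  qed
  also have "\<dots> = (\<Sum>i\<in>UNIV. ap i x + am i x) * b"
    by (simp add: sum_distrib_right distrib_right)
  also have "\<dots> = l * b" using assms(3) by simp
  finally show ?thesis .
qed

lemma stencil_diff_abs_le:
  fixes ap am :: "'d::finite \<Rightarrow> real^'d \<Rightarrow> real"
  assumes "\<And>i. 0 \<le> ap i y" "\<And>i. 0 \<le> am i y" "(\<Sum>i\<in>UNIV. ap i y + am i y) = l"
    and "\<And>i. \<bar>ap i x - ap i y\<bar> \<le> e" "\<And>i. \<bar>am i x - am i y\<bar> \<le> e"
    and "\<And>z. \<bar>u z\<bar> \<le> b"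
    and "\<And>i. \<bar>u (x + h *\<^sub>R axis i 1) - u (y + h *\<^sub>R axis i 1)\<bar> \<le> D"
    and "\<And>i. \<bar>u (x - h *\<^sub>R axis i 1) - u (y - h *\<^sub>R axis i 1)\<bar> \<le> D"
  shows "\<bar>stencil h ap am u x - stencil h ap am u y\<bar> \<le> 2 * real CARD('d) * (e * b) + l * D"
proof -
  let ?xp = "\<lambda>i. x + h *\<^sub>R axis i 1" and ?xm = "\<lambda>i. x - h *\<^sub>R axis i 1"
  let ?yp = "\<lambda>i. y + h *\<^sub>R axis i 1" and ?ym = "\<lambda>i. y - h *\<^sub>R axis i 1"
  have split: "stencil h ap am u x - stencil h ap am u y = (\<Sum>i\<in>UNIV.
      (ap i x - ap i y) * u (?xp i) + ap i y * (u (?xp i) - u (?yp i))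
    + ((am i x - am i y) * u (?xm i) + am i y * (u (?xm i) - u (?ym i))))"
    unfolding stencil_def sum_subtractf[symmetric] by (rule sum.cong) (auto simp: algebra_simps)
  have b: "0 \<le> b" using assms(6)[of x] by linarith
  have "\<bar>stencil h ap am u x - stencil h ap am u y\<bar>
      \<le> (\<Sum>i\<in>UNIV. 2 * (e * b) + (ap i y + am i y) * D)"
    unfolding split
  proof (rule order_trans[OF sum_abs], rule sum_mono)
    fix i
    have "\<bar>(ap i x - ap i y) * u (?xp i)\<bar> \<le> e * b" "\<bar>(am i x - am i y) * u (?xm i)\<bar> \<le> e * b"
      unfolding abs_mult using assms(4,5)[of i] assms(6) b by (auto intro!: mult_mono)
    moreover have "\<bar>ap i y * (u (?xp i) - u (?yp i))\<bar> \<le> ap i y * D"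
      "\<bar>am i y * (u (?xm i) - u (?ym i))\<bar> \<le> am i y * D"
      using assms(1,2,7,8)[of i] by (simp_all add: abs_mult mult_left_mono)
    ultimately show "\<bar>(ap i x - ap i y) * u (?xp i) + ap i y * (u (?xp i) - u (?yp i))
        + ((am i x - am i y) * u (?xm i) + am i y * (u (?xm i) - u (?ym i)))\<bar>
       \<le> 2 * (e * b) + (ap i y + am i y) * D"
      by (simp add: distrib_right)
  qed
  also have "\<dots> = 2 * real CARD('d) * (e * b) + l * D"
    using assms(3) by (simp add: sum.distrib sum_distrib_right[symmetric])
  finally show ?thesis .
qed

section \<open>The scheme for a fixed policy\<close>

(* Data of the time-reversed scheme w' = g + P w - l w, w 0 = q, for a fixed policy. *)
locale stencil_ode =
  fixes T h l Q G Lq Lg La :: real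
    and q :: "real^'d::finite \<Rightarrow> real"
    and g :: "real \<Rightarrow> real^'d \<Rightarrow> real"
    and ap am :: "real \<Rightarrow> 'd \<Rightarrow> real^'d \<Rightarrow> real"
  assumes T_nonneg: "0 \<le> T"
    and q_bound: "\<And>x. \<bar>q x\<bar> \<le> Q"
    and q_lipschitz: "\<And>x y. \<bar>q x - q y\<bar> \<le> Lq * dist x y" and Lq_nonneg: "0 \<le> Lq"
    and g_continuous: "\<And>x. continuous_on {0..T} (\<lambda>r. g r x)"
    and g_bound: "\<And>r x. r \<in> {0..T} \<Longrightarrow> \<bar>g r x\<bar> \<le> G"
    and g_lipschitz: "\<And>r x y. r \<in> {0..T} \<Longrightarrow> \<bar>g r x - g r y\<bar> \<le> Lg * dist x y"
    and Lg_nonneg: "0 \<le> Lg"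
    and weights_continuous:
      "\<And>i x. continuous_on {0..T} (\<lambda>r. ap r i x)" "\<And>i x. continuous_on {0..T} (\<lambda>r. am r i x)"
    and weights_nonneg:
      "\<And>r i x. r \<in> {0..T} \<Longrightarrow> 0 \<le> ap r i x" "\<And>r i x. r \<in> {0..T} \<Longrightarrow> 0 \<le> am r i x"
    and weights_sum: "\<And>r x. r \<in> {0..T} \<Longrightarrow> (\<Sum>i\<in>UNIV. ap r i x + am r i x) = l"
    and weights_lipschitz:
      "\<And>r i x y. r \<in> {0..T} \<Longrightarrow> \<bar>ap r i x - ap r i y\<bar> \<le> La * dist x y"
      "\<And>r i x y. r \<in> {0..T} \<Longrightarrow> \<bar>am r i x - am r i y\<bar> \<le> La * dist x y"
    and La_nonneg: "0 \<le> La"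
begin

abbreviation P :: "(real \<Rightarrow> real^'d \<Rightarrow> real) \<Rightarrow> real \<Rightarrow> real^'d \<Rightarrow> real" where
  "P u r x \<equiv> stencil h (ap r) (am r) (u r) x"

lemma Q_nonneg: "0 \<le> Q"
  using q_bound[of 0] by linarith

lemma G_nonneg: "0 \<le> G"
  using g_bound[of 0 0] T_nonneg by fastforce

lemma l_nonneg: "0 \<le> l"
proof -
  have "0 \<le> (\<Sum>i\<in>UNIV. ap 0 i 0 + am 0 i 0)"
    using weights_nonneg T_nonneg by (intro sum_nonneg add_nonneg_nonneg) auto
  then show ?thesis using weights_sum[of 0 0] T_nonneg by simp
qed

lemma P_abs_le:
  "r \<in> {0..T} \<Longrightarrow> (\<And>y. \<bar>u r y\<bar> \<le> b) \<Longrightarrow> \<bar>P u r x\<bar> \<le> l * b"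
  by (rule stencil_abs_le) (auto intro: weights_nonneg weights_sum)

primrec picard :: "nat \<Rightarrow> real \<Rightarrow> real^'d \<Rightarrow> real" where
  "picard 0 = (\<lambda>s x. q x + integral {0..s} (\<lambda>r. exp (l * r) * g r x))"
| "picard (Suc k) = (\<lambda>s x. integral {0..s} (\<lambda>r. P (picard k) r x))"

definition picard_deriv :: "nat \<Rightarrow> real \<Rightarrow> real^'d \<Rightarrow> real" where
  "picard_deriv k s x = (case k of 0 \<Rightarrow> exp (l * s) * g s x | Suc j \<Rightarrow> P (picard j) s x)"

lemma picard_has_derivative:
  "s \<in> {0..T} \<Longrightarrow> ((\<lambda>s. picard k s x) has_real_derivative picard_deriv k s x) (at s within {0..T})"
proof (induction k arbitrary: s x)
  case 0
  have "continuous_on {0..T} (\<lambda>r. exp (l * r) * g r x)"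
    by (intro continuous_intros g_continuous)
  from DERIV_add[OF DERIV_const integral_has_real_derivative[OF this \<open>s \<in> {0..T}\<close>]]
  show ?case by (simp add: picard_deriv_def)
next
  case (Suc k)
  have "continuous_on {0..T} (\<lambda>s. picard k s y)" for y
    using Suc.IH by (intro DERIV_continuous_on)
  then have "continuous_on {0..T} (\<lambda>r. P (picard k) r x)"
    unfolding stencil_def by (intro continuous_intros weights_continuous)
  from integral_has_real_derivative[OF this \<open>s \<in> {0..T}\<close>]
  show ?case by (simp add: picard_deriv_def)
qed

definition picard_const :: real where
  "picard_const = Q + exp (l * T) * G * T"

lemma picard_const_nonneg: "0 \<le> picard_const"
  unfolding picard_const_def using Q_nonneg G_nonneg T_nonneg by simp

lemma picard_abs_le_power:
  "s \<in> {0..T} \<Longrightarrow> \<bar>picard k s x\<bar> \<le> picard_const * (l * s)^k / fact k"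
proof (induction k arbitrary: s x)
  case 0
  then have s: "0 \<le> s" "s \<le> T" by auto
  have "\<bar>picard 0 s x\<bar> \<le> Q + exp (l * T) * G * s"
  proof (rule abs_le_by_derivative_comparison[OF s(1)])
    fix r assume r: "r \<in> {0..s}"
    then have rT: "r \<in> {0..T}" using s by auto
    show "((\<lambda>s. picard 0 s x) has_real_derivative picard_deriv 0 r x) (at r within {0..s})"
      by (rule DERIV_subset[OF picard_has_derivative[OF rT]]) (use s in auto)
    show "((\<lambda>s. Q + exp (l * T) * G * s) has_real_derivative exp (l * T) * G) (at r within {0..s})"
      by (auto intro!: derivative_eq_intros)
    have "exp (l * r) \<le> exp (l * T)" using rT l_nonneg by (simp add: mult_left_mono)
    then show "\<bar>picard_deriv 0 r x\<bar> \<le> exp (l * T) * G"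
      unfolding picard_deriv_def using g_bound[OF rT, of x] by (simp add: abs_mult mult_mono G_nonneg)
  qed (use q_bound in simp)
  also have "\<dots> \<le> picard_const"
    unfolding picard_const_def using s G_nonneg by (simp add: mult_left_mono)
  finally show ?case by simp
next
  case (Suc k)
  then have s: "0 \<le> s" "s \<le> T" by auto
  show ?case
  proof (rule abs_le_by_derivative_comparison[OF s(1)])
    fix r assume r: "r \<in> {0..s}"
    then have rT: "r \<in> {0..T}" using s by auto
    show "((\<lambda>s. picard (Suc k) s x) has_real_derivative picard_deriv (Suc k) r x) (at r within {0..s})"
      by (rule DERIV_subset[OF picard_has_derivative[OF rT]]) (use s in auto)
    show "((\<lambda>s. picard_const * (l * s)^Suc k / fact (Suc k)) has_real_derivative
        l * (picard_const * (l * r)^k / fact k)) (at r within {0..s})"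
      by (rule has_real_derivative_power_over_fact)
    have "\<bar>P (picard k) r x\<bar> \<le> l * (picard_const * (l * r)^k / fact k)"
      by (rule P_abs_le[OF rT]) (use Suc.IH rT in auto)
    then show "\<bar>picard_deriv (Suc k) r x\<bar> \<le> l * (picard_const * (l * r)^k / fact k)"
      unfolding picard_deriv_def by simp
  qed simp
qed

lemma picard_abs_le:
  assumes "s \<in> {0..T}"
  shows "\<bar>picard k s x\<bar> \<le> picard_const * (l * T)^k / fact k"
proof -
  have "(l * s)^k \<le> (l * T)^k"
    using assms l_nonneg by (intro power_mono mult_left_mono) auto
  then show ?thesis
    using picard_abs_le_power[OF assms] picard_const_nonneg
    by (meson divide_right_mono fact_ge_zero mult_left_mono order_trans)
qed

lemma picard_summable: "s \<in> {0..T} \<Longrightarrow> summable (\<lambda>k. picard k s x)"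
  by (rule summable_comparison_test'[OF sums_summable[OF sums_const_mult_exp], of 0])
     (use picard_abs_le in auto)

definition U :: "real \<Rightarrow> real^'d \<Rightarrow> real" where
  "U s x = (\<Sum>k. picard k s x)"

definition U_const :: real where
  "U_const = picard_const * exp (l * T)"

lemma U_abs_le_const:
  assumes "s \<in> {0..T}"
  shows "\<bar>U s x\<bar> \<le> U_const"
proof -
  have "norm (\<Sum>k. picard k s x) \<le> (\<Sum>k. picard_const * (l * T)^k / fact k)"
    using assms picard_abs_le by (intro norm_suminf_le sums_summable[OF sums_const_mult_exp]) auto
  then show ?thesis
    using sums_unique[OF sums_const_mult_exp[of picard_const "l * T"]] by (simp add: U_def U_const_def)
qed

lemma U_initial: "U 0 x = q x"
proof -
  have "picard k 0 x = (if k = 0 then q x else 0)" for k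
    by (cases k) auto
  then show ?thesis
    using sums_single[of 0 "\<lambda>_. q x"] unfolding U_def by (simp add: sums_iff)
qed

lemma picard_deriv_dominated:
  obtains M where "summable M" "\<And>k s x. s \<in> {0..T} \<Longrightarrow> \<bar>picard_deriv k s x\<bar> \<le> M k"
proof
  define M where
    "M k = (case k of 0 \<Rightarrow> exp (l * T) * G | Suc j \<Rightarrow> l * picard_const * (l * T)^j / fact j)" for k
  show "summable M"
    by (subst summable_Suc_iff[symmetric]) (simp add: M_def sums_summable[OF sums_const_mult_exp])
  fix k s x assume s: "s \<in> {0..T}"
  show "\<bar>picard_deriv k s x\<bar> \<le> M k"
  proof (cases k)
    case 0
    have "exp (l * s) \<le> exp (l * T)" using s l_nonneg by (simp add: mult_left_mono)
    then show ?thesis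
      unfolding picard_deriv_def M_def 0 using g_bound[OF s, of x] by (simp add: abs_mult mult_mono G_nonneg)
  next
    case (Suc j)
    have "\<bar>P (picard j) s x\<bar> \<le> l * (picard_const * (l * T)^j / fact j)"
      by (rule P_abs_le[OF s]) (use picard_abs_le s in auto)
    then show ?thesis unfolding picard_deriv_def M_def Suc by simp
  qed
qed

lemma U_has_derivative_suminf:
  assumes s: "s \<in> {0..T}"
  shows "((\<lambda>s. U s x) has_real_derivative (\<Sum>k. picard_deriv k s x)) (at s within {0..T})"
proof -
  obtain M where M: "summable M" "\<And>k s x. s \<in> {0..T} \<Longrightarrow> \<bar>picard_deriv k s x\<bar> \<le> M k"
    using picard_deriv_dominated by blast
  have "uniform_limit {0..T} (\<lambda>n s. \<Sum>k<n. picard_deriv k s x) (\<lambda>s. \<Sum>k. picard_deriv k s x) sequentially"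
    using M by (intro Weierstrass_m_test) auto
  moreover have "(0::real) \<in> {0..T}" using T_nonneg by simp
  ultimately obtain V where V: "\<forall>s\<in>{0..T}. (\<lambda>k. picard k s x) sums V s \<and>
      (V has_real_derivative (\<Sum>k. picard_deriv k s x)) (at s within {0..T})"
    using has_field_derivative_series[where f="\<lambda>k s. picard k s x" and f'="\<lambda>k s. picard_deriv k s x",
        OF convex_real_interval(5) picard_has_derivative _ _ picard_summable]
    by blast
  show ?thesis
  proof (rule has_field_derivative_transform_within[where f=V and d=1])
    show "(V has_real_derivative (\<Sum>k. picard_deriv k s x)) (at s within {0..T})" using V s by blast
    fix s' assume "s' \<in> {0..T}" "dist s' s < 1"
    then show "V s' = U s' x" unfolding U_def using V sums_unique by metis
  qed (use s in auto)
qed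

lemma suminf_picard_deriv:
  assumes s: "s \<in> {0..T}"
  shows "(\<Sum>k. picard_deriv k s x) = exp (l * s) * g s x + P U s x"
proof -
  obtain M where M: "summable M" "\<And>k s x. s \<in> {0..T} \<Longrightarrow> \<bar>picard_deriv k s x\<bar> \<le> M k"
    using picard_deriv_dominated by blast
  have summable_deriv: "summable (\<lambda>k. picard_deriv k s x)"
    using M(2)[OF s] by (intro summable_comparison_test'[OF M(1), of 0]) auto
  have "(\<Sum>k. picard_deriv k s x) = exp (l * s) * g s x + (\<Sum>k. P (picard k) s x)"
    using suminf_split_head[OF summable_deriv] unfolding picard_deriv_def by simp
  also have "(\<Sum>k. P (picard k) s x) = P U s x"
  proof -
    have summable: "summable (\<lambda>k. picard k s y)" for y using picard_summable[OF s] .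
    have "(\<Sum>k. P (picard k) s x) = (\<Sum>i\<in>UNIV. \<Sum>k. ap s i x * picard k s (x + h *\<^sub>R axis i 1)
        + am s i x * picard k s (x - h *\<^sub>R axis i 1))"
      unfolding stencil_def by (rule suminf_sum) (intro summable_add summable_mult summable)
    also have "\<dots> = P U s x"
      unfolding stencil_def U_def
      by (rule sum.cong[OF refl]) (simp add: suminf_add[symmetric] suminf_mult summable summable_mult)
    finally show ?thesis .
  qed
  finally show ?thesis .
qed

lemma U_has_derivative:
  assumes "s \<in> {0..T}"
  shows "((\<lambda>s. U s x) has_real_derivative exp (l * s) * g s x + P U s x) (at s within {0..T})"
  using U_has_derivative_suminf[OF assms] unfolding suminf_picard_deriv[OF assms] .

(* |U| - b is a subsolution with zero data, so each comparison pass improves the current bound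
   by a factor l s / (k + 1). *)
lemma U_abs_le:
  assumes "s \<in> {0..T}"
  shows "\<bar>U s x\<bar> \<le> exp (l * s) * (Q + G * s)"
proof -
  let ?b = "\<lambda>r. exp (l * r) * (Q + G * r)"
  have "\<bar>U s x\<bar> - ?b s \<le> 0"
  proof (rule nonpos_by_factorial_iteration[where \<phi>="\<lambda>x s. \<bar>U s x\<bar> - ?b s" and M=U_const and L=l,
        OF _ _ assms])
    fix y s assume s: "s \<in> {0..T}"
    have "0 \<le> ?b s" using Q_nonneg G_nonneg s by simp
    then show "\<bar>U s y\<bar> - ?b s \<le> U_const" using U_abs_le_const[OF s, of y] by linarith
  next
    fix k y s assume s: "s \<in> {0..T}"
      and hyp: "\<And>y' r. r \<in> {0..s} \<Longrightarrow> \<bar>U r y'\<bar> - ?b r \<le> U_const * (l * r)^k / fact k"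
    have "\<bar>U s y\<bar> \<le> ?b s + U_const * (l * s)^Suc k / fact (Suc k)"
    proof (rule abs_le_by_derivative_comparison[where a=0 and F="\<lambda>r. U r y"
          and F'="\<lambda>r. exp (l * r) * g r y + P U r y"])
      show "0 \<le> s" using s by simp
      fix r assume r: "r \<in> {0..s}"
      then have rT: "r \<in> {0..T}" using s by auto
      show "((\<lambda>r. U r y) has_real_derivative exp (l * r) * g r y + P U r y) (at r within {0..s})"
        by (rule DERIV_subset[OF U_has_derivative[OF rT]]) (use s in auto)
      show "((\<lambda>r. ?b r + U_const * (l * r)^Suc k / fact (Suc k)) has_real_derivative
          (exp (l * r) * G + l * ?b r) + l * (U_const * (l * r)^k / fact k)) (at r within {0..s})"
        by (intro DERIV_add has_real_derivative_exp_mult_affine has_real_derivative_power_over_fact)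
      have "\<bar>exp (l * r) * g r y\<bar> \<le> exp (l * r) * G"
        using g_bound[OF rT, of y] by (simp add: abs_mult mult_left_mono)
      moreover have "\<bar>P U r y\<bar> \<le> l * (?b r + U_const * (l * r)^k / fact k)"
        by (rule P_abs_le[OF rT]) (use hyp[OF r] in \<open>auto simp: algebra_simps\<close>)
      ultimately show "\<bar>exp (l * r) * g r y + P U r y\<bar>
          \<le> (exp (l * r) * G + l * ?b r) + l * (U_const * (l * r)^k / fact k)"
        by (simp add: algebra_simps)
    qed (use U_initial q_bound in simp)
    then show "\<bar>U s y\<bar> - ?b s \<le> U_const * (l * s)^Suc k / fact (Suc k)" by simp
  qed
  then show ?thesis by simp
qed

definition W_bound :: real where
  "W_bound = Q + G * T"

lemma W_bound_nonneg: "0 \<le> W_bound"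
  unfolding W_bound_def using Q_nonneg G_nonneg T_nonneg by simp

lemma U_abs_le_W_bound: "r \<in> {0..T} \<Longrightarrow> \<bar>U r x\<bar> \<le> exp (l * r) * W_bound"
  using U_abs_le[of r x] G_nonneg unfolding W_bound_def
  by (meson atLeastAtMost_iff add_left_mono exp_ge_zero mult_left_mono order_trans)

definition lip_rate :: real where
  "lip_rate = Lg + 2 * real CARD('d) * La * W_bound"

lemma lip_rate_nonneg: "0 \<le> lip_rate"
  unfolding lip_rate_def using Lg_nonneg La_nonneg W_bound_nonneg by simp

lemma U_derivative_diff_abs_le:
  assumes r: "r \<in> {0..T}" and U_diff: "\<And>x' y'. \<bar>U r x' - U r y'\<bar> \<le> D * dist x' y' + E"
  shows "\<bar>(exp (l * r) * g r x + P U r x) - (exp (l * r) * g r y + P U r y)\<bar>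
    \<le> exp (l * r) * lip_rate * dist x y + l * (D * dist x y + E)"
proof -
  have "\<bar>exp (l * r) * g r x - exp (l * r) * g r y\<bar> \<le> exp (l * r) * (Lg * dist x y)"
    using g_lipschitz[OF r, of x y] by (simp add: abs_mult mult_left_mono right_diff_distrib[symmetric])
  moreover have "\<bar>P U r x - P U r y\<bar>
      \<le> 2 * real CARD('d) * (La * dist x y * (exp (l * r) * W_bound)) + l * (D * dist x y + E)"
  proof (rule stencil_diff_abs_le)
    fix i
    show "\<bar>U r (x + h *\<^sub>R axis i 1) - U r (y + h *\<^sub>R axis i 1)\<bar> \<le> D * dist x y + E"
      using U_diff[of "x + h *\<^sub>R axis i 1" "y + h *\<^sub>R axis i 1"] by simp
    show "\<bar>U r (x - h *\<^sub>R axis i 1) - U r (y - h *\<^sub>R axis i 1)\<bar> \<le> D * dist x y + E"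
      using U_diff[of "x - h *\<^sub>R axis i 1" "y - h *\<^sub>R axis i 1"] by (simp add: dist_norm)
  qed (use r weights_nonneg weights_sum weights_lipschitz U_abs_le_W_bound in auto)
  moreover have "2 * real CARD('d) * (La * dist x y * (exp (l * r) * W_bound))
      + exp (l * r) * (Lg * dist x y) = exp (l * r) * lip_rate * dist x y"
    unfolding lip_rate_def by (simp add: algebra_simps)
  ultimately show ?thesis by (simp add: algebra_simps)
qed

lemma U_diff_abs_le:
  assumes "s \<in> {0..T}"
  shows "\<bar>U s x - U s y\<bar> \<le> exp (l * s) * (Lq + lip_rate * s) * dist x y"
proof -
  let ?c = "\<lambda>r. exp (l * r) * (Lq + lip_rate * r)"
  let ?\<phi> = "\<lambda>(x, y) s. \<bar>U s x - U s y\<bar> - ?c s * dist x y"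
  have "?\<phi> (x, y) s \<le> 0"
  proof (rule nonpos_by_factorial_iteration[where \<phi>="?\<phi>" and M="2 * U_const" and L=l,
        OF _ _ assms])
    fix z :: "(real^'d) \<times> (real^'d)" and s assume s: "s \<in> {0..T}"
    obtain x y where z: "z = (x, y)" by force
    have "0 \<le> ?c s * dist x y" using Lq_nonneg lip_rate_nonneg s by simp
    then show "?\<phi> z s \<le> 2 * U_const"
      using U_abs_le_const[OF s, of x] U_abs_le_const[OF s, of y] z by simp
  next
    fix k and z :: "(real^'d) \<times> (real^'d)" and s assume s: "s \<in> {0..T}"
      and hyp: "\<And>z' r. r \<in> {0..s} \<Longrightarrow> ?\<phi> z' r \<le> 2 * U_const * (l * r)^k / fact k"
    obtain x y where z: "z = (x, y)" by force
    let ?d = "dist x y" and ?e = "\<lambda>r. 2 * U_const * (l * r)^k / fact k"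
    have hyp': "\<bar>U r x' - U r y'\<bar> \<le> ?c r * dist x' y' + ?e r" if "r \<in> {0..s}" for r x' y'
      using hyp[OF that, of "(x', y')"] by simp
    have "\<bar>U s x - U s y\<bar> \<le> ?c s * ?d + 2 * U_const * (l * s)^Suc k / fact (Suc k)"
    proof (rule abs_le_by_derivative_comparison[where a=0 and F="\<lambda>r. U r x - U r y" and
          F'="\<lambda>r. (exp (l * r) * g r x + P U r x) - (exp (l * r) * g r y + P U r y)"])
      show "0 \<le> s" using s by simp
      fix r assume r: "r \<in> {0..s}"
      then have rT: "r \<in> {0..T}" using s by auto
      show "((\<lambda>r. U r x - U r y) has_real_derivative
          (exp (l * r) * g r x + P U r x) - (exp (l * r) * g r y + P U r y)) (at r within {0..s})"
        by (intro DERIV_diff DERIV_subset[OF U_has_derivative[OF rT]]) (use s in auto)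
      show "((\<lambda>r. ?c r * ?d + 2 * U_const * (l * r)^Suc k / fact (Suc k)) has_real_derivative
          (exp (l * r) * lip_rate + l * ?c r) * ?d + l * ?e r) (at r within {0..s})"
        by (intro DERIV_add DERIV_cmult_right has_real_derivative_exp_mult_affine
            has_real_derivative_power_over_fact)
      have "\<bar>(exp (l * r) * g r x + P U r x) - (exp (l * r) * g r y + P U r y)\<bar>
          \<le> exp (l * r) * lip_rate * ?d + l * (?c r * ?d + ?e r)"
        by (rule U_derivative_diff_abs_le[OF rT hyp'[OF r]])
      then show "\<bar>(exp (l * r) * g r x + P U r x) - (exp (l * r) * g r y + P U r y)\<bar>
          \<le> (exp (l * r) * lip_rate + l * ?c r) * ?d + l * ?e r"
        by (simp add: algebra_simps)
    qed (use U_initial q_lipschitz in simp)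
    then show "?\<phi> z s \<le> 2 * U_const * (l * s)^Suc k / fact (Suc k)" using z by simp
  qed
  then show ?thesis by simp
qed

definition W :: "real \<Rightarrow> real^'d \<Rightarrow> real" where
  "W s x = exp (- (l * s)) * U s x"

lemma W_initial: "W 0 x = q x"
  unfolding W_def using U_initial by simp

lemma W_has_derivative:
  assumes s: "s \<in> {0..T}"
  shows "((\<lambda>s. W s x) has_real_derivative g s x + P W s x - l * W s x) (at s within {0..T})"
proof -
  have "((\<lambda>s. exp (- (l * s)) * U s x) has_real_derivative
      exp (- (l * s)) * (- l) * U s x + exp (- (l * s)) * (exp (l * s) * g s x + P U s x))
      (at s within {0..T})"
    by (auto intro!: derivative_eq_intros U_has_derivative[OF s])
  moreover have "P W s x = exp (- (l * s)) * P U s x"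
    unfolding W_def by (rule stencil_cmult)
  moreover have "exp (- (l * s)) * exp (l * s) = 1"
    by (simp add: exp_add[symmetric])
  ultimately show ?thesis
    unfolding W_def by (simp add: algebra_simps)
qed

lemma W_reversed_has_derivative:
  assumes t: "t \<in> {0<..<T}"
  shows "((\<lambda>s. W (T - s) x) has_real_derivative - (g (T - t) x + P W (T - t) x - l * W (T - t) x)) (at t)"
proof -
  have W': "((\<lambda>s. W s x) has_real_derivative g (T - t) x + P W (T - t) x - l * W (T - t) x) (at (T - t))"
    using W_has_derivative[of "T - t" x] t by (simp add: at_within_Icc_at)
  have "((\<lambda>s. T - s) has_real_derivative -1) (at t)"
    by (auto intro!: derivative_eq_intros)
  from DERIV_chain2[OF W' this] show ?thesis by simp
qed

lemma W_abs_le: "s \<in> {0..T} \<Longrightarrow> \<bar>W s x\<bar> \<le> W_bound"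
proof -
  assume s: "s \<in> {0..T}"
  have "\<bar>W s x\<bar> = exp (- (l * s)) * \<bar>U s x\<bar>"
    unfolding W_def by (simp add: abs_mult)
  also have "\<dots> \<le> exp (- (l * s)) * (exp (l * s) * W_bound)"
    using U_abs_le_W_bound[OF s, of x] by (simp add: mult_left_mono)
  also have "\<dots> = W_bound"
    by (simp add: exp_add[symmetric] mult.assoc[symmetric])
  finally show ?thesis .
qed

lemma W_diff_abs_le_space:
  assumes s: "s \<in> {0..T}"
  shows "\<bar>W s x - W s y\<bar> \<le> (Lq + lip_rate * T) * dist x y"
proof -
  have "\<bar>W s x - W s y\<bar> = exp (- (l * s)) * \<bar>U s x - U s y\<bar>"
    unfolding W_def by (simp add: abs_mult right_diff_distrib[symmetric])
  also have "\<dots> \<le> exp (- (l * s)) * (exp (l * s) * (Lq + lip_rate * s) * dist x y)"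
    using U_diff_abs_le[OF s, of x y] by (simp add: mult_left_mono)
  also have "\<dots> = (Lq + lip_rate * s) * dist x y"
    by (simp add: exp_add[symmetric] mult.assoc[symmetric])
  also have "\<dots> \<le> (Lq + lip_rate * T) * dist x y"
    using s lip_rate_nonneg by (intro mult_right_mono add_left_mono mult_left_mono) auto
  finally show ?thesis .
qed

lemma W_diff_abs_le_time:
  assumes "s \<in> {0..T}" "s' \<in> {0..T}"
  shows "\<bar>W s x - W s' x\<bar> \<le> (G + 2 * l * W_bound) * dist s s'"
proof -
  have "\<bar>W b x - W a x\<bar> \<le> (G + 2 * l * W_bound) * (b - a)"
    if ab: "a \<le> b" "a \<in> {0..T}" "b \<in> {0..T}" for a b
  proof (rule abs_le_by_derivative_comparison[where F="\<lambda>r. W r x - W a x"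
        and F'="\<lambda>r. g r x + P W r x - l * W r x" and R'="\<lambda>r. G + 2 * l * W_bound", OF ab(1)])
    fix r assume r: "r \<in> {a..b}"
    then have rT: "r \<in> {0..T}" using ab by auto
    show "((\<lambda>r. W r x - W a x) has_real_derivative g r x + P W r x - l * W r x) (at r within {a..b})"
      using DERIV_subset[OF W_has_derivative[OF rT]] ab by (auto intro!: derivative_eq_intros)
    show "((\<lambda>r. (G + 2 * l * W_bound) * (r - a)) has_real_derivative G + 2 * l * W_bound)
        (at r within {a..b})"
      by (auto intro!: derivative_eq_intros)
    have "\<bar>P W r x\<bar> \<le> l * W_bound" "\<bar>l * W r x\<bar> \<le> l * W_bound"
      using P_abs_le[OF rT] W_abs_le[OF rT] l_nonneg by (auto simp: abs_mult mult_left_mono)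
    then show "\<bar>g r x + P W r x - l * W r x\<bar> \<le> G + 2 * l * W_bound"
      using g_bound[OF rT, of x] by linarith
  qed simp
  then show ?thesis
    using assms by (cases "s' \<le> s") (force simp: dist_real_def abs_minus_commute)+
qed

lemma W_lipschitz:
  "(G + 2 * l * W_bound + (Lq + lip_rate * T))-lipschitz_on ({0..T} \<times> UNIV) (\<lambda>(s, x). W s x)"
  using G_nonneg l_nonneg W_bound_nonneg Lq_nonneg lip_rate_nonneg T_nonneg
  by (intro lipschitz_on_separately W_diff_abs_le_time W_diff_abs_le_space) auto

end

section \<open>Policy iteration\<close>

lemma lipschitz_on_vec_nth:
  fixes H :: "'p::metric_space \<Rightarrow> real^'d"
  assumes "K-lipschitz_on S H"
  shows "K-lipschitz_on S (\<lambda>p. H p $ i)"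
proof (rule lipschitz_onI)
  fix x y assume "x \<in> S" "y \<in> S"
  then have "dist (H x) (H y) \<le> K * dist x y" by (rule lipschitz_onD[OF assms])
  then show "dist (H x $ i) (H y $ i) \<le> K * dist x y"
    using dist_vec_nth_le[of "H x" i "H y"] by linarith
qed (rule lipschitz_on_nonneg[OF assms])

lemma lipschitz_on_time_slices:
  fixes H :: "real \<times> 'x::metric_space \<Rightarrow> real"
  assumes H: "K-lipschitz_on ({0..T} \<times> UNIV) H"
  shows "continuous_on {0..T} (\<lambda>r. H (T - r, x))"
    and "r \<in> {0..T} \<Longrightarrow> \<bar>H (T - r, x) - H (T - r, y)\<bar> \<le> K * dist x y"
proof -
  show "continuous_on {0..T} (\<lambda>r. H (T - r, x))"
    by (rule continuous_on_compose2[OF lipschitz_on_continuous_on[OF H]])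
       (auto intro!: continuous_intros)
  show "\<bar>H (T - r, x) - H (T - r, y)\<bar> \<le> K * dist x y" if "r \<in> {0..T}"
    using lipschitz_onD[OF H, of "(T - r, x)" "(T - r, y)"] that
    by (simp add: dist_real_def dist_Pair_Pair)
qed

lemma lipschitz_on_time_reversal:
  fixes w :: "real \<Rightarrow> 'x::metric_space \<Rightarrow> real"
  assumes w: "K-lipschitz_on ({0..T} \<times> UNIV) (\<lambda>(s, x). w s x)"
  shows "K-lipschitz_on ({0..T} \<times> UNIV) (\<lambda>(t, x). w (T - t) x)"
proof (rule lipschitz_onI)
  fix p p' :: "real \<times> 'x" assume "p \<in> {0..T} \<times> UNIV" "p' \<in> {0..T} \<times> UNIV"
  moreover obtain t x t' y where p: "p = (t, x)" "p' = (t', y)" by force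
  ultimately have "dist (w (T - t) x) (w (T - t') y) \<le> K * dist (T - t, x) (T - t', y)"
    using lipschitz_onD[OF w, of "(T - t, x)" "(T - t', y)"] by auto
  moreover have "dist (T - t, x) (T - t', y) = dist p p'"
    using p by (simp add: dist_Pair_Pair dist_real_def abs_minus_commute)
  ultimately show "dist ((\<lambda>(t, x). w (T - t) x) p) ((\<lambda>(t, x). w (T - t) x) p') \<le> K * dist p p'"
    using p by simp
qed (rule lipschitz_on_nonneg[OF w])

lemma lipschitz_on_feedback:
  fixes F :: "'t::metric_space \<Rightarrow> 'x::metric_space \<Rightarrow> 'a::metric_space \<Rightarrow> 'b::metric_space"
  assumes F: "KF-lipschitz_on (S \<times> UNIV \<times> A) (\<lambda>(t, x, a). F t x a)"
    and \<alpha>: "K\<alpha>-lipschitz_on (S \<times> UNIV) (\<lambda>(t, x). \<alpha> t x)"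
    and \<alpha>_A: "\<And>t x. t \<in> S \<Longrightarrow> \<alpha> t x \<in> A"
  shows "(KF * (1 + K\<alpha>))-lipschitz_on (S \<times> UNIV) (\<lambda>(t, x). F t x (\<alpha> t x))"
proof (rule lipschitz_onI)
  have KF: "0 \<le> KF" and K\<alpha>: "0 \<le> K\<alpha>"
    using lipschitz_on_nonneg[OF F] lipschitz_on_nonneg[OF \<alpha>] .
  then show "0 \<le> KF * (1 + K\<alpha>)" by simp
  fix p p' :: "'t \<times> 'x" assume "p \<in> S \<times> UNIV" "p' \<in> S \<times> UNIV"
  moreover obtain t x t' y where p: "p = (t, x)" "p' = (t', y)" by force
  ultimately have t: "t \<in> S" "t' \<in> S" by auto
  have "dist (t, x, \<alpha> t x) (t', y, \<alpha> t' y) = dist (p, \<alpha> t x) (p', \<alpha> t' y)"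
    using p by (simp add: dist_Pair_Pair add.assoc)
  also have "\<dots> \<le> dist p p' + dist (\<alpha> t x) (\<alpha> t' y)"
    unfolding dist_Pair_Pair[of p] by (rule sqrt_sum_squares_le_sum) simp_all
  also have "\<dots> \<le> (1 + K\<alpha>) * dist p p'"
    using lipschitz_onD[OF \<alpha>, of p p'] t p by (simp add: distrib_right)
  finally have "KF * dist (t, x, \<alpha> t x) (t', y, \<alpha> t' y) \<le> KF * ((1 + K\<alpha>) * dist p p')"
    by (rule mult_left_mono[OF _ KF])
  moreover have "dist (F t x (\<alpha> t x)) (F t' y (\<alpha> t' y)) \<le> KF * dist (t, x, \<alpha> t x) (t', y, \<alpha> t' y)"
    using lipschitz_onD[OF F, of "(t, x, \<alpha> t x)" "(t', y, \<alpha> t' y)"] t \<alpha>_A by auto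
  ultimately show "dist ((\<lambda>(t, x). F t x (\<alpha> t x)) p) ((\<lambda>(t, x). F t x (\<alpha> t x)) p')
      \<le> KF * (1 + K\<alpha>) * dist p p'"
    using p by simp
qed

lemma lipschitz_on_grad_h:
  fixes v :: "'t::metric_space \<Rightarrow> real^'d \<Rightarrow> real"
  assumes h: "0 < h" and v: "K-lipschitz_on (S \<times> UNIV) (\<lambda>(t, x). v t x)"
  shows "(real CARD('d) * K / h)-lipschitz_on (S \<times> UNIV) (\<lambda>(t, x). grad_h h (v t) x)"
proof (rule lipschitz_onI)
  show "0 \<le> real CARD('d) * K / h" using lipschitz_on_nonneg[OF v] h by simp
  fix p p' :: "'t \<times> (real^'d)" assume "p \<in> S \<times> UNIV" "p' \<in> S \<times> UNIV"
  moreover obtain t x t' y where p: "p = (t, x)" "p' = (t', y)" by force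
  ultimately have t: "t \<in> S" "t' \<in> S" by auto
  have shift: "\<bar>v t (x + z) - v t' (y + z)\<bar> \<le> K * dist p p'" for z
    using lipschitz_onD[OF v, of "(t, x + z)" "(t', y + z)"] t p
    by (simp add: dist_Pair_Pair dist_real_def)
  have component: "\<bar>(grad_h h (v t) x - grad_h h (v t') y) $ i\<bar> \<le> K * dist p p' / h" for i
  proof -
    let ?e = "h *\<^sub>R axis i 1"
    have "\<bar>(grad_h h (v t) x - grad_h h (v t') y) $ i\<bar>
        = \<bar>(v t (x + ?e) - v t' (y + ?e)) - (v t (x - ?e) - v t' (y - ?e))\<bar> / (2 * h)"
      using h by (simp add: grad_h_def diff_divide_distrib[symmetric] abs_divide algebra_simps)
    also have "\<dots> \<le> (K * dist p p' + K * dist p p') / (2 * h)"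
      using shift[of ?e] shift[of "- ?e"] h by (intro divide_right_mono) auto
    also have "\<dots> = K * dist p p' / h"
      using h by simp
    finally show ?thesis .
  qed
  have "dist (grad_h h (v t) x) (grad_h h (v t') y)
      \<le> (\<Sum>i\<in>UNIV. \<bar>(grad_h h (v t) x - grad_h h (v t') y) $ i\<bar>)"
    unfolding dist_norm by (rule norm_le_l1_cart)
  also have "\<dots> \<le> (\<Sum>i\<in>(UNIV::'d set). K * dist p p' / h)"
    by (rule sum_mono[OF component])
  also have "\<dots> = real CARD('d) * K / h * dist p p'"
    by simp
  finally show "dist ((\<lambda>(t, x). grad_h h (v t) x) p) ((\<lambda>(t, x). grad_h h (v t) x) p')
      \<le> real CARD('d) * K / h * dist p p'"
    using p by simp
qed

lemma grad_h_lap_h_as_stencil: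
  fixes u :: "real^'d \<Rightarrow> real" and F :: "real^'d"
  assumes h: "0 < h"
    and ap: "\<And>i. ap i x = N / h + F $ i / (2 * h)" and am: "\<And>i. am i x = N / h - F $ i / (2 * h)"
  shows "grad_h h u x \<bullet> F + N * h * lap_h h u x
    = stencil h ap am u x - (2 * real CARD('d) * N / h) * u x"
proof -
  let ?up = "\<lambda>i. u (x + h *\<^sub>R axis i 1)" and ?um = "\<lambda>i. u (x - h *\<^sub>R axis i 1)"
  have "grad_h h u x \<bullet> F + N * h * lap_h h u x
      = (\<Sum>i\<in>UNIV. (?up i - ?um i) / (2 * h) * F $ i + N * h * ((?up i - 2 * u x + ?um i) / h\<^sup>2))"
    by (simp add: grad_h_def lap_h_def inner_vec_def sum.distrib sum_distrib_left)
  also have "\<dots> = (\<Sum>i\<in>UNIV. ap i x * ?up i + am i x * ?um i - 2 * N / h * u x)"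
    using h by (intro sum.cong) (simp_all add: ap am field_simps power2_eq_square)
  also have "\<dots> = stencil h ap am u x - (2 * real CARD('d) * N / h) * u x"
    by (simp add: stencil_def sum_subtractf)
  finally show ?thesis .
qed

(* The mesh size h enters the locale only through the abbreviation P, so it is not an argument
   of the locale predicate. *)
lemma stencil_ode_of_scheme:
  fixes C :: "real \<times> (real^'d) \<Rightarrow> real" and F :: "real \<times> (real^'d) \<Rightarrow> real^'d"
  assumes T: "0 \<le> T" and h: "0 < h"
    and C_lip: "Lc-lipschitz_on ({0..T} \<times> UNIV) C"
    and C_bound: "\<And>t x. t \<in> {0..T} \<Longrightarrow> \<bar>C (t, x)\<bar> \<le> Cc"
    and F_lip: "Lf-lipschitz_on ({0..T} \<times> UNIV) F"
    and F_bound: "\<And>t x. t \<in> {0..T} \<Longrightarrow> norm (F (t, x)) \<le> 2 * N"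
    and q_bound: "\<And>x. \<bar>q x\<bar> \<le> Cq" and q_lip: "Kq-lipschitz_on UNIV q"
  shows "stencil_ode T (2 * real CARD('d) * N / h) Cq Cc Kq Lc (Lf / (2 * h)) q
    (\<lambda>r x. C (T - r, x))
    (\<lambda>r i x. N / h + F (T - r, x) $ i / (2 * h)) (\<lambda>r i x. N / h - F (T - r, x) $ i / (2 * h))"
proof
  have F_i: "Lf-lipschitz_on ({0..T} \<times> UNIV) (\<lambda>p. F p $ i)" for i
    by (rule lipschitz_on_vec_nth[OF F_lip])
  have F_i_bound: "\<bar>F (T - r, x) $ i\<bar> \<le> 2 * N" if "r \<in> {0..T}" for r x i
    using component_le_norm_cart[of "F (T - r, x)" i] F_bound[of "T - r" x] that by force
  have F_i_diff:
    "\<bar>F (T - r, x) $ i / (2 * h) - F (T - r, y) $ i / (2 * h)\<bar> \<le> Lf / (2 * h) * dist x y" if "r \<in> {0..T}" for r x y i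
    using lipschitz_on_time_slices(2)[OF F_i that, where x=x and y=y] h
    by (simp add: diff_divide_distrib[symmetric] abs_divide divide_right_mono)
  show "0 \<le> T" by (rule T)
  show "\<bar>q x\<bar> \<le> Cq" for x by (rule q_bound)
  show "\<bar>q x - q y\<bar> \<le> Kq * dist x y" for x y
    using lipschitz_onD[OF q_lip] by (simp add: dist_real_def)
  show "0 \<le> Kq" by (rule lipschitz_on_nonneg[OF q_lip])
  show "continuous_on {0..T} (\<lambda>r. C (T - r, x))" for x
    by (rule lipschitz_on_time_slices(1)[OF C_lip])
  show "\<bar>C (T - r, x)\<bar> \<le> Cc" if "r \<in> {0..T}" for r x
    using C_bound that by simp
  show "\<bar>C (T - r, x) - C (T - r, y)\<bar> \<le> Lc * dist x y" if "r \<in> {0..T}" for r x y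
    by (rule lipschitz_on_time_slices(2)[OF C_lip that])
  show "0 \<le> Lc" by (rule lipschitz_on_nonneg[OF C_lip])
  show "continuous_on {0..T} (\<lambda>r. N / h + F (T - r, x) $ i / (2 * h))"
    "continuous_on {0..T} (\<lambda>r. N / h - F (T - r, x) $ i / (2 * h))" for i x
    by (intro continuous_intros lipschitz_on_time_slices(1)[OF F_i], use h in simp)+
  show "0 \<le> N / h + F (T - r, x) $ i / (2 * h)" "0 \<le> N / h - F (T - r, x) $ i / (2 * h)"
    if "r \<in> {0..T}" for r i x
    using F_i_bound[OF that, of x i] h by (simp_all add: field_simps)
  show "(\<Sum>i\<in>UNIV. N / h + F (T - r, x) $ i / (2 * h) + (N / h - F (T - r, x) $ i / (2 * h)))
      = 2 * real CARD('d) * N / h" for r x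
    by simp
  show "\<bar>N / h + F (T - r, x) $ i / (2 * h) - (N / h + F (T - r, y) $ i / (2 * h))\<bar>
      \<le> Lf / (2 * h) * dist x y"
    "\<bar>N / h - F (T - r, x) $ i / (2 * h) - (N / h - F (T - r, y) $ i / (2 * h))\<bar>
      \<le> Lf / (2 * h) * dist x y"
    if "r \<in> {0..T}" for r i x y
    using F_i_diff[OF that, of x i y] by (simp_all add: abs_minus_commute)
  show "0 \<le> Lf / (2 * h)" using lipschitz_on_nonneg[OF F_lip] h by simp
qed

definition admissible_policy ::
    "real \<Rightarrow> 'a::metric_space set \<Rightarrow> (real \<Rightarrow> 'x::metric_space \<Rightarrow> 'a) \<Rightarrow> bool" where
  "admissible_policy T A \<alpha> \<longleftrightarrow>
     (\<forall>t\<in>{0..T}. \<forall>x. \<alpha> t x \<in> A) \<and> (\<exists>K. K-lipschitz_on ({0..T} \<times> UNIV) (\<lambda>(t, x). \<alpha> t x))"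

lemma admissible_policy_update:
  fixes alpha :: "real \<Rightarrow> real^'d \<Rightarrow> real^'d \<Rightarrow> 'a::metric_space"
  assumes h: "0 < h"
    and alpha_lip: "K-lipschitz_on ({0..T} \<times> UNIV \<times> UNIV) (\<lambda>(t, x, p). alpha t x p)"
    and alpha_A: "\<And>t x p. t \<in> {0..T} \<Longrightarrow> alpha t x p \<in> A"
    and v_lip: "Kv-lipschitz_on ({0..T} \<times> UNIV) (\<lambda>(t, x). v t x)"
  shows "admissible_policy T A (\<lambda>t x. alpha t x (grad_h h (v t) x))"
  unfolding admissible_policy_def
  using alpha_A lipschitz_on_feedback[OF alpha_lip lipschitz_on_grad_h[OF h v_lip]] by blast

definition scheme_solution :: "real \<Rightarrow> real \<Rightarrow> real \<Rightarrow> (real \<Rightarrow> real^'d \<Rightarrow> 'a \<Rightarrow> real)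
    \<Rightarrow> (real \<Rightarrow> real^'d \<Rightarrow> 'a \<Rightarrow> real^'d) \<Rightarrow> (real^'d \<Rightarrow> real) \<Rightarrow> (real \<Rightarrow> real^'d \<Rightarrow> 'a)
    \<Rightarrow> (real \<Rightarrow> real^'d \<Rightarrow> real) \<Rightarrow> bool" where
  "scheme_solution T N h c f q \<alpha> v \<longleftrightarrow>
     (\<exists>K. K-lipschitz_on ({0..T} \<times> UNIV) (\<lambda>(t, x). v t x)) \<and> (\<forall>x. v T x = q x) \<and>
     (\<forall>t\<in>{0<..<T}. \<forall>x. \<exists>D. ((\<lambda>s. v s x) has_real_derivative D) (at t) \<and>
        D + c t x (\<alpha> t x) + grad_h h (v t) x \<bullet> f t x (\<alpha> t x) = - N * h * lap_h h (v t) x)"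

lemma fixed_policy_scheme_solvable:
  fixes c :: "real \<Rightarrow> real^'d \<Rightarrow> 'a::metric_space \<Rightarrow> real"
    and f :: "real \<Rightarrow> real^'d \<Rightarrow> 'a \<Rightarrow> real^'d"
  assumes T: "0 \<le> T" and h: "0 < h"
    and c_lip: "Kc-lipschitz_on ({0..T} \<times> UNIV \<times> A) (\<lambda>(t, x, a). c t x a)"
    and f_lip: "Kf-lipschitz_on ({0..T} \<times> UNIV \<times> A) (\<lambda>(t, x, a). f t x a)"
    and c_bound: "\<And>t x a. t \<in> {0..T} \<Longrightarrow> a \<in> A \<Longrightarrow> \<bar>c t x a\<bar> \<le> Cc"
    and f_bound: "\<And>t x a. t \<in> {0..T} \<Longrightarrow> a \<in> A \<Longrightarrow> norm (f t x a) \<le> 2 * N"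
    and q_bound: "\<And>x. \<bar>q x\<bar> \<le> Cq" and q_lip: "Kq-lipschitz_on UNIV q"
    and \<alpha>: "admissible_policy T A \<alpha>"
  shows "\<exists>v. scheme_solution T N h c f q \<alpha> v \<and> (\<forall>t\<in>{0..T}. \<forall>x. \<bar>v t x\<bar> \<le> Cq + Cc * T)"
proof -
  obtain K\<alpha> where \<alpha>_A: "\<And>t x. t \<in> {0..T} \<Longrightarrow> \<alpha> t x \<in> A"
    and \<alpha>_lip: "K\<alpha>-lipschitz_on ({0..T} \<times> UNIV) (\<lambda>(t, x). \<alpha> t x)"
    using \<alpha> unfolding admissible_policy_def by blast
  let ?l = "2 * real CARD('d) * N / h"
  let ?ap = "\<lambda>r i x. N / h + f (T - r) x (\<alpha> (T - r) x) $ i / (2 * h)"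
  let ?am = "\<lambda>r i x. N / h - f (T - r) x (\<alpha> (T - r) x) $ i / (2 * h)"
  interpret stencil_ode T h ?l Cq Cc Kq "Kc * (1 + K\<alpha>)" "Kf * (1 + K\<alpha>) / (2 * h)" q
      "\<lambda>r x. c (T - r) x (\<alpha> (T - r) x)" ?ap ?am
    using stencil_ode_of_scheme[OF T h lipschitz_on_feedback[OF c_lip \<alpha>_lip \<alpha>_A] _
        lipschitz_on_feedback[OF f_lip \<alpha>_lip \<alpha>_A] _ q_bound q_lip] c_bound f_bound \<alpha>_A
    by simp
  define v where "v t = W (T - t)" for t
  show ?thesis
    unfolding scheme_solution_def
  proof (intro exI[of _ v] conjI ballI allI)
    show "\<exists>K. K-lipschitz_on ({0..T} \<times> UNIV) (\<lambda>(t, x). v t x)"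
      unfolding v_def using lipschitz_on_time_reversal[OF W_lipschitz] by blast
    show "v T x = q x" for x
      unfolding v_def using W_initial by simp
    show "\<bar>v t x\<bar> \<le> Cq + Cc * T" if "t \<in> {0..T}" for t x
      unfolding v_def using W_abs_le[of "T - t" x] that W_bound_def by simp
  next
    fix t x assume t: "t \<in> {0<..<T}"
    let ?D = "- (c t x (\<alpha> t x) + P W (T - t) x - ?l * W (T - t) x)"
    have "((\<lambda>s. v s x) has_real_derivative ?D) (at t)"
      using W_reversed_has_derivative[OF t, of x] unfolding v_def by simp
    moreover have "grad_h h (v t) x \<bullet> f t x (\<alpha> t x) + N * h * lap_h h (v t) x
        = P W (T - t) x - ?l * W (T - t) x"
      unfolding v_def using h by (intro grad_h_lap_h_as_stencil) simp_all
    ultimately show "\<exists>D. ((\<lambda>s. v s x) has_real_derivative D) (at t) \<and>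
        D + c t x (\<alpha> t x) + grad_h h (v t) x \<bullet> f t x (\<alpha> t x) = - N * h * lap_h h (v t) x"
      by (intro exI[of _ ?D]) (auto simp: algebra_simps)
  qed
qed

lemma policy_iteration_exists:
  assumes "G \<alpha>\<^sub>0"
    and solve: "\<And>\<alpha>. G \<alpha> \<Longrightarrow> \<exists>v. R \<alpha> v"
    and update: "\<And>\<alpha> v. G \<alpha> \<Longrightarrow> R \<alpha> v \<Longrightarrow> G (F v)"
  obtains \<alpha> v where "\<alpha> 0 = \<alpha>\<^sub>0" "\<And>n. G (\<alpha> n)" "\<And>n. R (\<alpha> n) (v n)" "\<And>n. \<alpha> (Suc n) = F (v n)"
proof -
  define V where "V \<alpha> = (SOME v. R \<alpha> v)" for \<alpha>
  define \<alpha> where "\<alpha> = rec_nat \<alpha>\<^sub>0 (\<lambda>_ a. F (V a))"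
  have R_V: "R a (V a)" if "G a" for a
    unfolding V_def using solve[OF that] by (rule someI_ex)
  have \<alpha>_0: "\<alpha> 0 = \<alpha>\<^sub>0" and \<alpha>_Suc: "\<alpha> (Suc n) = F (V (\<alpha> n))" for n
    by (simp_all add: \<alpha>_def)
  have G: "G (\<alpha> n)" for n
    by (induction n) (auto simp: \<alpha>_0 \<alpha>_Suc assms(1) intro: update R_V)
  show thesis
    by (rule that[of \<alpha> "\<lambda>n. V (\<alpha> n)"]) (simp_all add: \<alpha>_0 \<alpha>_Suc G R_V)
qed

lemma norm_le_sup_norm:
  assumes "bounded ((\<lambda>(t, x, a). f t x a) ` ({0..T} \<times> UNIV \<times> A))" "t \<in> {0..T}" "a \<in> A"
  shows "norm (f t x a) \<le> sup_norm T A f"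
proof -
  have "bdd_above ((\<lambda>z. norm (f (fst z) (fst (snd z)) (snd (snd z)))) ` ({0..T} \<times> UNIV \<times> A))"
    using assms(1) by (intro bounded_imp_bdd_above) (simp add: bounded_norm_comp case_prod_beta)
  then show ?thesis
    unfolding sup_norm_def using assms(2,3) by (intro cSUP_upper2[where x="(t, x, a)"]) auto
qed

lemma semi_discrete_policy_iteration:
  fixes c :: "real \<Rightarrow> real^'d \<Rightarrow> 'a::metric_space \<Rightarrow> real"
    and f :: "real \<Rightarrow> real^'d \<Rightarrow> 'a \<Rightarrow> real^'d"
    and alpha :: "real \<Rightarrow> real^'d \<Rightarrow> real^'d \<Rightarrow> 'a"
  assumes T: "0 \<le> T" and h: "0 < h"
    and c_lip: "Kc-lipschitz_on ({0..T} \<times> UNIV \<times> A) (\<lambda>(t, x, a). c t x a)"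
    and f_lip: "Kf-lipschitz_on ({0..T} \<times> UNIV \<times> A) (\<lambda>(t, x, a). f t x a)"
    and c_bound: "\<And>t x a. t \<in> {0..T} \<Longrightarrow> a \<in> A \<Longrightarrow> \<bar>c t x a\<bar> \<le> Cc"
    and f_bound: "\<And>t x a. t \<in> {0..T} \<Longrightarrow> a \<in> A \<Longrightarrow> norm (f t x a) \<le> 2 * N"
    and q_bound: "\<And>x. \<bar>q x\<bar> \<le> Cq" and q_lip: "Kq-lipschitz_on UNIV q"
    and alpha_lip: "Kal-lipschitz_on ({0..T} \<times> UNIV \<times> UNIV) (\<lambda>(t, x, p). alpha t x p)"
    and alpha_A: "\<And>t x p. t \<in> {0..T} \<Longrightarrow> alpha t x p \<in> A"
    and alpha0: "admissible_policy T A alpha0"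
  shows "\<exists>v \<alpha>. \<alpha> 0 = alpha0 \<and>
     (\<forall>n. (\<exists>K. K-lipschitz_on ({0..T} \<times> UNIV) (\<lambda>(t,x). v n t x)) \<and>
          (\<exists>K. K-lipschitz_on ({0<..<T} \<times> UNIV) (\<lambda>(t,x). \<alpha> n t x)) \<and>
          (\<forall>t\<in>{0<..<T}. \<forall>x. \<alpha> n t x \<in> A) \<and>
          (\<forall>x. v n T x = q x) \<and>
          (\<forall>t\<in>{0<..<T}. \<forall>x. \<exists>D. ((\<lambda>s. v n s x) has_real_derivative D) (at t) \<and>
               D + c t x (\<alpha> n t x) + grad_h h (v n t) x \<bullet> f t x (\<alpha> n t x)
                 = - N * h * lap_h h (v n t) x) \<and>
          (\<forall>t\<in>{0<..<T}. \<forall>x. \<alpha> (Suc n) t x = alpha t x (grad_h h (v n t) x)) \<and>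
          (\<forall>t\<in>{0..T}. \<forall>x. \<bar>v n t x\<bar> \<le> Cq + Cc * T))"
proof -
  have solve: "\<exists>v. scheme_solution T N h c f q \<alpha> v \<and> (\<forall>t\<in>{0..T}. \<forall>x. \<bar>v t x\<bar> \<le> Cq + Cc * T)"
    if "admissible_policy T A \<alpha>" for \<alpha>
    using fixed_policy_scheme_solvable[OF T h c_lip f_lip _ _ q_bound q_lip that] c_bound f_bound
    by blast
  have update: "admissible_policy T A (\<lambda>t x. alpha t x (grad_h h (v t) x))"
    if "admissible_policy T A \<alpha>"
      and "scheme_solution T N h c f q \<alpha> v \<and> (\<forall>t\<in>{0..T}. \<forall>x. \<bar>v t x\<bar> \<le> Cq + Cc * T)" for \<alpha> v
    using that(2) admissible_policy_update[OF h alpha_lip alpha_A] unfolding scheme_solution_def by blast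
  obtain \<alpha> v where "\<alpha> 0 = alpha0" and adm: "\<And>n. admissible_policy T A (\<alpha> n)"
    and sol: "\<And>n. scheme_solution T N h c f q (\<alpha> n) (v n) \<and>
      (\<forall>t\<in>{0..T}. \<forall>x. \<bar>v n t x\<bar> \<le> Cq + Cc * T)"
    and "\<And>n. \<alpha> (Suc n) = (\<lambda>t x. alpha t x (grad_h h (v n t) x))"
    by (rule policy_iteration_exists[where G="admissible_policy T A"
          and R="\<lambda>\<alpha> v. scheme_solution T N h c f q \<alpha> v \<and>
            (\<forall>t\<in>{0..T}. \<forall>x. \<bar>v t x\<bar> \<le> Cq + Cc * T)"
          and F="\<lambda>v t x. alpha t x (grad_h h (v t) x)"])
      (assumption | rule alpha0 solve update that)+
  moreover have "(\<exists>K. K-lipschitz_on ({0<..<T} \<times> UNIV) (\<lambda>(t, x). \<alpha> n t x)) \<and>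
      (\<forall>t\<in>{0<..<T}. \<forall>x. \<alpha> n t x \<in> A)" for n
    using adm[of n] unfolding admissible_policy_def
    by (meson greaterThanLessThan_subseteq_atLeastAtMost_iff lipschitz_on_subset order_refl
        Sigma_mono subsetD)
  ultimately show ?thesis
    using sol unfolding scheme_solution_def by (intro exI[of _ v] exI[of _ \<alpha>]) auto
qed

theorem proposition2p2:
  fixes T N :: real
    and A :: "(real^'m) set"
    and c :: "real \<Rightarrow> real^'d \<Rightarrow> real^'m \<Rightarrow> real"
    and f :: "real \<Rightarrow> real^'d \<Rightarrow> real^'m \<Rightarrow> real^'d"
    and q :: "real^'d \<Rightarrow> real"
    and alpha :: "real \<Rightarrow> real^'d \<Rightarrow> real^'d \<Rightarrow> real^'m"
    and alpha0 :: "real \<Rightarrow> real^'d \<Rightarrow> real^'m"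
  assumes T: "T \<ge> 1"
    and A: "compact A"
    and c_bdd: "bounded ((\<lambda>(t,x,a). c t x a) ` ({0..T} \<times> UNIV \<times> A))"
    and c_lip: "\<exists>K. K-lipschitz_on ({0..T} \<times> UNIV \<times> A) (\<lambda>(t,x,a). c t x a)"
    and f_bdd: "bounded ((\<lambda>(t,x,a). f t x a) ` ({0..T} \<times> UNIV \<times> A))"
    and f_lip: "\<exists>K. K-lipschitz_on ({0..T} \<times> UNIV \<times> A) (\<lambda>(t,x,a). f t x a)"
    and q_bdd: "bounded (range q)"
    and q_lip: "\<exists>K. K-lipschitz_on UNIV q"
    and alpha_argmin: "\<And>t x p. t \<in> {0..T} \<Longrightarrow> alpha t x p \<in> A \<and>
        (\<forall>a\<in>A. a \<noteq> alpha t x p \<longrightarrow>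
           c t x (alpha t x p) + p \<bullet> f t x (alpha t x p) < c t x a + p \<bullet> f t x a)"
    and alpha_lip: "\<exists>K. K-lipschitz_on ({0..T} \<times> UNIV \<times> UNIV) (\<lambda>(t,x,p). alpha t x p)"
    and alpha0_cont: "continuous_on UNIV (\<lambda>(t,x). alpha0 t x)"
    and alpha0_A: "\<And>t x. alpha0 t x \<in> A"
    and alpha0_lip: "\<exists>K. K-lipschitz_on UNIV (\<lambda>(t,x). alpha0 t x)"
    and N: "N \<ge> max 1 (sup_norm T A f / 2)"
  shows "\<exists>C. \<forall>h \<in> {0<..<1}. \<exists>(v :: nat \<Rightarrow> real \<Rightarrow> real^'d \<Rightarrow> real)
                                  (\<alpha> :: nat \<Rightarrow> real \<Rightarrow> real^'d \<Rightarrow> real^'m).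
     \<alpha> 0 = alpha0 \<and>
     (\<forall>n. (\<exists>K. K-lipschitz_on ({0..T} \<times> UNIV) (\<lambda>(t,x). v n t x)) \<and>
          (\<exists>K. K-lipschitz_on ({0<..<T} \<times> UNIV) (\<lambda>(t,x). \<alpha> n t x)) \<and>
          (\<forall>t\<in>{0<..<T}. \<forall>x. \<alpha> n t x \<in> A) \<and>
          (\<forall>x. v n T x = q x) \<and>
          (\<forall>t\<in>{0<..<T}. \<forall>x. \<exists>D. ((\<lambda>s. v n s x) has_real_derivative D) (at t) \<and>
               D + c t x (\<alpha> n t x) + grad_h h (v n t) x \<bullet> f t x (\<alpha> n t x)
                 = - N * h * lap_h h (v n t) x) \<and>
          (\<forall>t\<in>{0<..<T}. \<forall>x. \<alpha> (Suc n) t x = alpha t x (grad_h h (v n t) x)) \<and>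
          (\<forall>t\<in>{0..T}. \<forall>x. \<bar>v n t x\<bar> \<le> C))"
proof -
  obtain Kc where Kc: "Kc-lipschitz_on ({0..T} \<times> UNIV \<times> A) (\<lambda>(t, x, a). c t x a)"
    using c_lip by blast
  obtain Kf where Kf: "Kf-lipschitz_on ({0..T} \<times> UNIV \<times> A) (\<lambda>(t, x, a). f t x a)"
    using f_lip by blast
  obtain Kq where Kq: "Kq-lipschitz_on UNIV q" using q_lip by blast
  obtain Kal where Kal: "Kal-lipschitz_on ({0..T} \<times> UNIV \<times> UNIV) (\<lambda>(t, x, p). alpha t x p)"
    using alpha_lip by blast
  obtain Ka0 where Ka0: "Ka0-lipschitz_on UNIV (\<lambda>(t, x). alpha0 t x)" using alpha0_lip by blast
  obtain Cc where Cc: "\<forall>z\<in>(\<lambda>(t, x, a). c t x a) ` ({0..T} \<times> UNIV \<times> A). norm z \<le> Cc"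
    using c_bdd bounded_iff by blast
  obtain Cq where Cq: "\<forall>z\<in>range q. norm z \<le> Cq" using q_bdd bounded_iff by blast
  have c_bound: "\<bar>c t x a\<bar> \<le> Cc" if "t \<in> {0..T}" "a \<in> A" for t x a
    using Cc that by force
  have f_bound: "norm (f t x a) \<le> 2 * N" if "t \<in> {0..T}" "a \<in> A" for t x a
    using norm_le_sup_norm[OF f_bdd that, of x] N by simp
  have "admissible_policy T A alpha0"
    unfolding admissible_policy_def using alpha0_A lipschitz_on_subset[OF Ka0] by blast
  then show ?thesis
    using T alpha_argmin Cq
    by (intro exI[of _ "Cq + Cc * T"] ballI
        semi_discrete_policy_iteration[OF _ _ Kc Kf c_bound f_bound _ Kq Kal]) auto
qed

end
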